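(* Let $A$ be a real nonsingular tridiagonal $n\times n$ matrix with diagonal entries $A_{i,i}=b_i$ ($i=1,\dots,n$), subdiagonal entries $A_{i+1,i}=a_i$ and superdiagonal entries $A_{i,i+1}=c_i$ ($i=1,\dots,n-1$), let $\mathbf F\in\mathbb R^n$ and let $\mathbf X$ be the solution of $A\mathbf X=\mathbf F$. Let $p\ge 1$ and let $n_1<n_2<\dots<n_p$ be integers with $1<n_1$ and $n_p<n$; set $n_0=1$ and $n_{p+1}=n+1$. Assume that the matrices $B^L_{n_i}$ and $B^R_{n_i}$ (defined below) are nonsingular for $i=1,\dots,p$, and let $\mathbf Z^L_{n_i}$, $\mathbf Z^R_{n_i}$ be the solutions of $B^L_{n_i}\mathbf Z^L_{n_i}=\mathbf e^L$ and $B^R_{n_i}\mathbf Z^R_{n_i}=\mathbf e^R$. Define $$\beta^L_{n_j}=\sum_{l=n_{j-1}}^{n_j-1}(\mathbf F)_l\,(A^{-1})_{n_{j-1},l}\quad (j=2,\dots,p+1),\qquad \beta^R_{n_j}=\sum_{l=n_{j-1}}^{n_j-1}(\mathbf F)_l\,(A^{-1})_{n_j,l}\quad (j=1,\dots,p).$$ Then for every $i=1,\dots,p$, $$(\mathbf X)_{n_i}=\sum_{j=1}^{i}\beta^R_{n_j}\,(\mathbf Z^R_{n_j})_{n_i}+\sum_{j=i+1}^{p+1}\beta^L_{n_j}\,(\mathbf Z^L_{n_{j-1}})_{n_i}.$$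
   Context: For $1\le k\le n$: $B^L_k$ is the $k\times k$ matrix whose rows $1,\dots,k-1$ are rows $1,\dots,k-1$ of $A$ restricted to columns $1,\dots,k$, and whose last row is $(0,\dots,0,1)$; $\mathbf e^L=(0,\dots,0,1)^{\mathrm T}\in\mathbb R^k$, and the components of $\mathbf Z^L_k$ are indexed $1,\dots,k$. $B^R_k$ is the $(n-k+1)\times(n-k+1)$ matrix with rows and columns indexed by $k,\dots,n$, whose row $k$ is $(1,0,\dots,0)$ and whose row $m$ ($m=k+1,\dots,n$) is row $m$ of $A$ restricted to columns $k,\dots,n$; $\mathbf e^R=(1,0,\dots,0)^{\mathrm T}\in\mathbb R^{n-k+1}$, and the components of $\mathbf Z^R_k$ are indexed $k,\dots,n$. $(\mathbf V)_m$ is the $m$-th component of a vector and $(A^{-1})_{r,l}$ the $(r,l)$ entry of $A^{-1}$. *)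

theory Defs
  imports "Jordan_Normal_Form.Matrix"
begin

text \<open>Index convention: Jordan_Normal_Form matrices/vectors are 0-indexed, so the
paper's index m (1-based) corresponds to index m-1 here.\<close>

definition tridiagonal :: "real mat \<Rightarrow> bool" where
  "tridiagonal A \<longleftrightarrow> (\<forall>i<dim_row A. \<forall>j<dim_col A. (j + 1 < i \<or> i + 1 < j) \<longrightarrow> A $$ (i,j) = 0)"

definition BL :: "real mat \<Rightarrow> nat \<Rightarrow> real mat" where
  "BL A k = mat k k (\<lambda>(i,j). if i + 1 < k then A $$ (i,j) else (if j + 1 = k then 1 else 0))"

definition eL :: "nat \<Rightarrow> real vec" where
  "eL k = vec k (\<lambda>i. if i + 1 = k then 1 else 0)"

text \<open>B^R_k (for an n x n matrix A): (n-k+1) x (n-k+1), local index r corresponds to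
paper index k+r; row k is (1,0,...,0); row m>k is row m of A restricted to columns k..n.\<close>
definition BR :: "real mat \<Rightarrow> nat \<Rightarrow> nat \<Rightarrow> real mat" where
  "BR A n k = mat (n - k + 1) (n - k + 1)
     (\<lambda>(r,s). if r = 0 then (if s = 0 then 1 else 0) else A $$ (k - 1 + r, k - 1 + s))"

definition eR :: "nat \<Rightarrow> nat \<Rightarrow> real vec" where
  "eR n k = vec (n - k + 1) (\<lambda>i. if i = 0 then 1 else 0)"

end

theory Submission imports Defs begin

text \<open>Expand \<open>X_m = \<Sum>_l F_l (A\<^sup>-\<^sup>1)_{m,l}\<close> and cut the range of \<open>l\<close> into the blocks
  \<open>[n_{j-1}, n_j)\<close>. Fix an index \<open>k\<close> and a column \<open>l\<close> of \<open>A\<^sup>-\<^sup>1\<close>. As \<open>A\<close> is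
  tridiagonal, rows \<open>m < k\<close> of \<open>A\<close> vanish right of column \<open>k\<close> and rows \<open>m > k\<close> vanish
  left of column \<open>k\<close>. Hence, reading off \<open>A A\<^sup>-\<^sup>1 = I\<close> in these rows, for \<open>l \<ge> k\<close> the
  entries \<open>1..k\<close> of column \<open>l\<close> solve \<open>B^L_k z = (A\<^sup>-\<^sup>1)_{k,l} e^L\<close>, and for \<open>l < k\<close> the
  entries \<open>k..n\<close> solve \<open>B^R_k z = (A\<^sup>-\<^sup>1)_{k,l} e^R\<close>. By uniqueness they are
  \<open>(A\<^sup>-\<^sup>1)_{k,l}\<close> times \<open>Z^L_k\<close> resp. \<open>Z^R_k\<close>. Taking \<open>k = n_j\<close> on the blocks left of
  \<open>n_i\<close> and \<open>k = n_{j-1}\<close> on those right of it, the factor \<open>(Z_k)_{n_i}\<close> does not depend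
  on \<open>l\<close> and leaves the block sum, which becomes \<open>\<beta>_{n_j}\<close>.\<close>

lemma invertible_mat_mult_vec_cancel:
  assumes B: "invertible_mat (B :: 'a :: semiring_1 mat)" and Bc: "B \<in> carrier_mat k k"
    and v: "v \<in> carrier_vec k" and w: "w \<in> carrier_vec k" and eq: "B *\<^sub>v v = B *\<^sub>v w"
  shows "v = w"
proof -
  obtain B' where inv: "B' * B = 1\<^sub>m (dim_row B')" "B * B' = 1\<^sub>m (dim_row B)"
    using B unfolding invertible_mat_def inverts_mat_def by blast
  have "dim_row B' = k" "dim_col B' = k"
    using inv Bc by (metis carrier_matD index_mult_mat(2,3) index_one_mat(2,3))+
  hence B'c: "B' \<in> carrier_mat k k" by auto
  have "v = (B' * B) *\<^sub>v v" using inv(1) v B'c by auto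
  also have "\<dots> = B' *\<^sub>v (B *\<^sub>v w)" using B'c Bc v eq by (simp add: assoc_mult_mat_vec)
  also have "\<dots> = (B' * B) *\<^sub>v w" using B'c Bc w by (simp add: assoc_mult_mat_vec)
  also have "\<dots> = w" using inv(1) w B'c by auto
  finally show ?thesis .
qed

lemma right_inverse_row_col_sum:
  assumes "A \<in> carrier_mat n n" "Ainv \<in> carrier_mat n n" "A * Ainv = 1\<^sub>m n" "m < n" "c < n"
  shows "(\<Sum>t\<in>{0..<n}. A $$ (m, t) * Ainv $$ (t, c)) = (if m = c then 1 else 0)"
proof -
  have "(A * Ainv) $$ (m, c) = 1\<^sub>m n $$ (m, c)" using assms(3) by simp
  thus ?thesis using assms(1,2,4,5) by (simp add: scalar_prod_def)
qed

lemma tridiagonal_row_sum_prefix: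
  assumes "A \<in> carrier_mat n n" "tridiagonal A" "m + 1 < k" "k \<le> n"
  shows "(\<Sum>t\<in>{0..<n}. A $$ (m, t) * v t) = (\<Sum>t\<in>{0..<k}. A $$ (m, t) * v t)"
proof -
  have "(\<Sum>t\<in>{k..<n}. A $$ (m, t) * v t) = 0"
    using assms unfolding tridiagonal_def by (intro sum.neutral) auto
  moreover have "{0..<n} = {0..<k} \<union> {k..<n}" using assms(4) by auto
  ultimately show ?thesis by (simp add: sum.union_disjoint)
qed

lemma tridiagonal_row_sum_suffix:
  assumes "A \<in> carrier_mat n n" "tridiagonal A" "K < m" "m < n"
  shows "(\<Sum>t\<in>{0..<n}. A $$ (m, t) * v t) = (\<Sum>s\<in>{0..<n - K}. A $$ (m, K + s) * v (K + s))"
proof -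
  have "(\<Sum>t\<in>{0..<K}. A $$ (m, t) * v t) = 0"
    using assms unfolding tridiagonal_def by (intro sum.neutral) auto
  moreover have "{0..<n} = {0..<K} \<union> {K..<n}" using assms by auto
  moreover have "(\<Sum>t\<in>{K..<n}. A $$ (m, t) * v t) = (\<Sum>s\<in>{0..<n - K}. A $$ (m, K + s) * v (K + s))"
    using sum.shift_bounds_nat_ivl[of "\<lambda>t. A $$ (m, t) * v t" 0 K "n - K"] assms
    by (simp add: add.commute)
  ultimately show ?thesis by (simp add: sum.union_disjoint)
qed

lemma inverse_entry_via_BL:
  assumes A: "A \<in> carrier_mat n n" and tri: "tridiagonal A"
    and Ai: "Ainv \<in> carrier_mat n n" and AAi: "A * Ainv = 1\<^sub>m n"
    and B: "invertible_mat (BL A k)"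
    and Zc: "Z \<in> carrier_vec k" and Z: "BL A k *\<^sub>v Z = eL k"
    and c: "k - 1 \<le> c" "c < n" and r: "r < k"
  shows "Ainv $$ (r, c) = Ainv $$ (k - 1, c) * Z $ r"
proof -
  define w where "w = vec k (\<lambda>r. Ainv $$ (r, c))"
  have Bc: "BL A k \<in> carrier_mat k k" unfolding BL_def by simp
  have "BL A k *\<^sub>v w = Ainv $$ (k - 1, c) \<cdot>\<^sub>v eL k"
  proof (rule eq_vecI)
    fix q assume "q < dim_vec (Ainv $$ (k - 1, c) \<cdot>\<^sub>v eL k)"
    hence q: "q < k" by (simp add: eL_def)
    show "(BL A k *\<^sub>v w) $ q = (Ainv $$ (k - 1, c) \<cdot>\<^sub>v eL k) $ q"
    proof (cases "q + 1 < k")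
      case True
      have "(BL A k *\<^sub>v w) $ q = (\<Sum>t\<in>{0..<k}. A $$ (q, t) * Ainv $$ (t, c))"
        using q True by (simp add: BL_def w_def mult_mat_vec_def scalar_prod_def)
      also have "\<dots> = (\<Sum>t\<in>{0..<n}. A $$ (q, t) * Ainv $$ (t, c))"
        using tridiagonal_row_sum_prefix[OF A tri True] c by simp
      also have "\<dots> = 0"
        using right_inverse_row_col_sum[OF A Ai AAi _ c(2), of q] True c by simp
      finally show ?thesis using q True by (simp add: eL_def)
    next
      case False
      hence "q = k - 1" using q by linarith
      moreover have "(BL A k *\<^sub>v w) $ (k - 1) = w $ (k - 1)"
        using q
        by (simp add: BL_def mult_mat_vec_def scalar_prod_def w_def,
            subst sum.cong[OF refl, of _ _ "\<lambda>t. if t = k - 1 then Ainv $$ (t, c) else 0"]) auto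
      ultimately show ?thesis using q by (simp add: w_def eL_def)
    qed
  qed (simp add: BL_def eL_def)
  also have "\<dots> = BL A k *\<^sub>v (Ainv $$ (k - 1, c) \<cdot>\<^sub>v Z)"
    using mult_mat_vec[OF Bc Zc] Z by simp
  finally have "w = Ainv $$ (k - 1, c) \<cdot>\<^sub>v Z"
    using invertible_mat_mult_vec_cancel[OF B Bc] Zc by (simp add: w_def)
  thus ?thesis using r Zc by (metis w_def index_smult_vec(1) index_vec carrier_vecD)
qed

lemma inverse_entry_via_BR:
  assumes A: "A \<in> carrier_mat n n" and tri: "tridiagonal A"
    and Ai: "Ainv \<in> carrier_mat n n" and AAi: "A * Ainv = 1\<^sub>m n"
    and B: "invertible_mat (BR A n k)"
    and Zc: "Z \<in> carrier_vec (n - k + 1)" and Z: "BR A n k *\<^sub>v Z = eR n k"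
    and k: "1 \<le> k" "k \<le> n" and c: "c < k - 1" and r: "r < n - k + 1"
  shows "Ainv $$ (k - 1 + r, c) = Ainv $$ (k - 1, c) * Z $ r"
proof -
  define K where "K = k - 1"
  define w where "w = vec (n - k + 1) (\<lambda>r. Ainv $$ (K + r, c))"
  have Bc: "BR A n k \<in> carrier_mat (n - k + 1) (n - k + 1)" unfolding BR_def by simp
  have "BR A n k *\<^sub>v w = Ainv $$ (K, c) \<cdot>\<^sub>v eR n k"
  proof (rule eq_vecI)
    fix q assume "q < dim_vec (Ainv $$ (K, c) \<cdot>\<^sub>v eR n k)"
    hence q: "q < n - k + 1" by (simp add: eR_def)
    show "(BR A n k *\<^sub>v w) $ q = (Ainv $$ (K, c) \<cdot>\<^sub>v eR n k) $ q"
    proof (cases "q = 0")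
      case True
      then show ?thesis using q
        by (simp add: BR_def eR_def w_def mult_mat_vec_def scalar_prod_def sum.atLeast_Suc_lessThan)
    next
      case False
      have m: "K < K + q" "K + q < n" using q k False K_def by linarith+
      have "(BR A n k *\<^sub>v w) $ q = (\<Sum>s\<in>{0..<n - K}. A $$ (K + q, K + s) * Ainv $$ (K + s, c))"
        using q False k by (simp add: BR_def w_def mult_mat_vec_def scalar_prod_def K_def
            Suc_diff_le add.commute)
      also have "\<dots> = (\<Sum>t\<in>{0..<n}. A $$ (K + q, t) * Ainv $$ (t, c))"
        using tridiagonal_row_sum_suffix[OF A tri m] by simp
      also have "\<dots> = 0"
        using right_inverse_row_col_sum[OF A Ai AAi m(2), of c] c k K_def by simp
      finally show ?thesis using q False by (simp add: eR_def)
    qed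
  qed (simp add: BR_def eR_def)
  also have "\<dots> = BR A n k *\<^sub>v (Ainv $$ (K, c) \<cdot>\<^sub>v Z)"
    using mult_mat_vec[OF Bc Zc] Z by simp
  finally have "w = Ainv $$ (K, c) \<cdot>\<^sub>v Z"
    using invertible_mat_mult_vec_cancel[OF B Bc] Zc by (simp add: w_def)
  thus ?thesis using r Zc
    by (metis w_def K_def index_smult_vec(1) index_vec carrier_vecD)
qed

lemma inverse_block_sum_via_BL:
  assumes A: "A \<in> carrier_mat n n" and tri: "tridiagonal A"
    and Ai: "Ainv \<in> carrier_mat n n" and AAi: "A * Ainv = 1\<^sub>m n"
    and B: "invertible_mat (BL A k)"
    and Zc: "Z \<in> carrier_vec k" and Z: "BL A k *\<^sub>v Z = eL k"
    and m: "1 \<le> m" "m \<le> k" and hi: "hi \<le> n + 1"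
  shows "(\<Sum>l=k..<hi. F $ (l - 1) * Ainv $$ (m - 1, l - 1))
       = (\<Sum>l=k..<hi. F $ (l - 1) * Ainv $$ (k - 1, l - 1)) * Z $ (m - 1)"
  unfolding sum_distrib_right
proof (rule sum.cong[OF refl])
  fix l assume "l \<in> {k..<hi}"
  hence "k - 1 \<le> l - 1" "l - 1 < n" "m - 1 < k" using m hi by auto
  thus "F $ (l - 1) * Ainv $$ (m - 1, l - 1) = F $ (l - 1) * Ainv $$ (k - 1, l - 1) * Z $ (m - 1)"
    using inverse_entry_via_BL[OF A tri Ai AAi B Zc Z, of "l - 1" "m - 1"] by simp
qed

lemma inverse_block_sum_via_BR:
  assumes A: "A \<in> carrier_mat n n" and tri: "tridiagonal A"
    and Ai: "Ainv \<in> carrier_mat n n" and AAi: "A * Ainv = 1\<^sub>m n"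
    and B: "invertible_mat (BR A n k)"
    and Zc: "Z \<in> carrier_vec (n - k + 1)" and Z: "BR A n k *\<^sub>v Z = eR n k"
    and lo: "1 \<le> lo" and m: "k \<le> m" "m \<le> n"
  shows "(\<Sum>l=lo..<k. F $ (l - 1) * Ainv $$ (m - 1, l - 1))
       = (\<Sum>l=lo..<k. F $ (l - 1) * Ainv $$ (k - 1, l - 1)) * Z $ (m - k)"
  unfolding sum_distrib_right
proof (rule sum.cong[OF refl])
  fix l assume "l \<in> {lo..<k}"
  hence "1 \<le> k" "k \<le> n" "l - 1 < k - 1" "m - k < n - k + 1" "k - 1 + (m - k) = m - 1"
    using lo m by auto
  thus "F $ (l - 1) * Ainv $$ (m - 1, l - 1) = F $ (l - 1) * Ainv $$ (k - 1, l - 1) * Z $ (m - k)"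
    using inverse_entry_via_BR[OF A tri Ai AAi B Zc Z, of "l - 1" "m - k"] by (metis mult.assoc)
qed

lemma sum_atLeastLessThan_blocks:
  fixes ns :: "nat \<Rightarrow> nat"
  assumes "\<And>j. j < m \<Longrightarrow> ns j \<le> ns (Suc j)"
  shows "(\<Sum>l=ns 0..<ns m. g l) = (\<Sum>j=1..m. \<Sum>l=ns (j - 1)..<ns j. g l)"
  using assms
proof (induction m)
  case (Suc m)
  have "ns 0 \<le> ns m" using lift_Suc_mono_le_ivl[of "{..<m}" ns 0 m] Suc.prems by (auto simp: atLeast0LessThan)
  moreover have "ns m \<le> ns (Suc m)" using Suc.prems by simp
  ultimately have "(\<Sum>l=ns 0..<ns (Suc m). g l)
      = (\<Sum>l=ns 0..<ns m. g l) + (\<Sum>l=ns m..<ns (Suc m). g l)"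
    by (simp add: sum.atLeastLessThan_concat)
  then show ?case using Suc by simp
qed simp

lemma solution_entry_eq_inverse_row_sum:
  fixes A Ainv :: "'a :: comm_semiring_1 mat"
  assumes A: "A \<in> carrier_mat n n" and Ai: "Ainv \<in> carrier_mat n n" "Ainv * A = 1\<^sub>m n"
    and X: "X \<in> carrier_vec n" "A *\<^sub>v X = F" and r: "r < n"
  shows "X $ r = (\<Sum>l=1..<n+1. F $ (l - 1) * Ainv $$ (r, l - 1))"
proof -
  have "X = Ainv *\<^sub>v F"
    using A Ai X by (metis assoc_mult_mat_vec one_mult_mat_vec)
  moreover have "dim_vec F = n" using X(2) A by auto
  ultimately have "X $ r = (\<Sum>l\<in>{0..<n}. F $ l * Ainv $$ (r, l))"
    using Ai(1) r by (simp add: mult_mat_vec_def scalar_prod_def mult.commute)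
  also have "\<dots> = (\<Sum>l=1..<n+1. F $ (l - 1) * Ainv $$ (r, l - 1))"
    using sum.shift_bounds_nat_ivl[of "\<lambda>l. F $ (l - 1) * Ainv $$ (r, l - 1)" 0 1 n] by simp
  finally show ?thesis .
qed

theorem theorem2:
  fixes A Ainv :: "real mat" and F X :: "real vec" and n p :: nat
    and ns :: "nat \<Rightarrow> nat" and ZL ZR :: "nat \<Rightarrow> real vec"
  assumes A: "A \<in> carrier_mat n n" and tri: "tridiagonal A"
    and Ainv: "Ainv \<in> carrier_mat n n" "A * Ainv = 1\<^sub>m n" "Ainv * A = 1\<^sub>m n"
    and F: "F \<in> carrier_vec n" and X: "X \<in> carrier_vec n" "A *\<^sub>v X = F"
    and p: "p \<ge> 1"
    and ns0: "ns 0 = 1" and nsp: "ns (Suc p) = n + 1"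
    and mono: "\<forall>j\<le>p. ns j < ns (Suc j)"
    and first: "1 < ns 1" and last: "ns p < n"
    and BLinv: "\<forall>i\<in>{1..p}. invertible_mat (BL A (ns i))"
    and BRinv: "\<forall>i\<in>{1..p}. invertible_mat (BR A n (ns i))"
    and ZL: "\<forall>i\<in>{1..p}. ZL (ns i) \<in> carrier_vec (ns i) \<and> BL A (ns i) *\<^sub>v ZL (ns i) = eL (ns i)"
    and ZR: "\<forall>i\<in>{1..p}. ZR (ns i) \<in> carrier_vec (n - ns i + 1) \<and>
                          BR A n (ns i) *\<^sub>v ZR (ns i) = eR n (ns i)"
  shows "\<forall>i\<in>{1..p}.
     X $ (ns i - 1) =
       (\<Sum>j=1..i. (\<Sum>l=ns (j-1)..<ns j. F $ (l-1) * Ainv $$ (ns j - 1, l - 1))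
                    * ZR (ns j) $ (ns i - ns j))
     + (\<Sum>j=i+1..p+1. (\<Sum>l=ns (j-1)..<ns j. F $ (l-1) * Ainv $$ (ns (j-1) - 1, l - 1))
                    * ZL (ns (j-1)) $ (ns i - 1))"
proof
  fix i assume i: "i \<in> {1..p}"
  have ns_le: "ns a \<le> ns b" if "a \<le> b" "b \<le> Suc p" for a b
    using lift_Suc_mono_le_ivl[of "{..p}" ns a b] mono that by fastforce
  have ns_pos: "1 \<le> ns j" if "j \<le> Suc p" for j
    using ns_le[of 0 j] ns0 that by simp
  have ns_le_Suc_n: "ns j \<le> n + 1" if "j \<le> Suc p" for j
    using ns_le[of j "Suc p"] nsp that by simp
  have "ns i \<le> n" using ns_le[of i p] i last by simp
  define f where "f l = F $ (l - 1) * Ainv $$ (ns i - 1, l - 1)" for l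
  have "X $ (ns i - 1) = (\<Sum>l=ns 0..<ns (Suc p). f l)"
    using solution_entry_eq_inverse_row_sum[OF A Ainv(1,3) X] ns_pos[of i] i \<open>ns i \<le> n\<close>
    unfolding ns0 nsp f_def by simp
  also have "\<dots> = (\<Sum>j=1..i. \<Sum>l=ns (j-1)..<ns j. f l) + (\<Sum>j=i+1..p+1. \<Sum>l=ns (j-1)..<ns j. f l)"
    using sum_atLeastLessThan_blocks[of "Suc p" ns f] mono i
      sum.ub_add_nat[of 1 i "\<lambda>j. \<Sum>l=ns (j-1)..<ns j. f l" "p+1-i"]
    by (simp add: less_imp_le del: sum.cl_ivl_Suc)
  also have "(\<Sum>j=1..i. \<Sum>l=ns (j-1)..<ns j. f l) =
       (\<Sum>j=1..i. (\<Sum>l=ns (j-1)..<ns j. F $ (l-1) * Ainv $$ (ns j - 1, l - 1))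
                    * ZR (ns j) $ (ns i - ns j))"
    unfolding f_def using i \<open>ns i \<le> n\<close>
    by (intro sum.cong refl inverse_block_sum_via_BR[OF A tri Ainv(1,2)] ns_pos ns_le
        BRinv[rule_format] conjunct1[OF ZR[rule_format]] conjunct2[OF ZR[rule_format]]) auto
  also have "(\<Sum>j=i+1..p+1. \<Sum>l=ns (j-1)..<ns j. f l) =
       (\<Sum>j=i+1..p+1. (\<Sum>l=ns (j-1)..<ns j. F $ (l-1) * Ainv $$ (ns (j-1) - 1, l - 1))
                    * ZL (ns (j-1)) $ (ns i - 1))"
    unfolding f_def using i
    by (intro sum.cong refl inverse_block_sum_via_BL[OF A tri Ainv(1,2)] ns_pos ns_le ns_le_Suc_n
        BLinv[rule_format] conjunct1[OF ZL[rule_format]] conjunct2[OF ZL[rule_format]]) auto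
  finally show "X $ (ns i - 1) =
      (\<Sum>j=1..i. (\<Sum>l=ns (j-1)..<ns j. F $ (l-1) * Ainv $$ (ns j - 1, l - 1))
                    * ZR (ns j) $ (ns i - ns j))
    + (\<Sum>j=i+1..p+1. (\<Sum>l=ns (j-1)..<ns j. F $ (l-1) * Ainv $$ (ns (j-1) - 1, l - 1))
                    * ZL (ns (j-1)) $ (ns i - 1))" .
qed

end
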